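(* Let $b>1$, let $(p,R,I)$ be proper with $I$ non-empty, and let $k$ be the greatest divisor of $p$ coprime with $b$. Then the $0$-circuits of the minimisation of $\mathcal{C}_{R,p,I}$ have a total of $k+1$ states.
   Context: $A_b=\{0,\ldots,b-1\}$. Given $p\ge1$, $R\subseteq\{0,\ldots,p-1\}$, finite $I\subseteq\mathbb{N}$, let $S=(R+p\mathbb{N})\oplus I$ ($\oplus$ = symmetric difference). $(p,R,I)$ is proper if $p$ is the smallest positive integer for which $S=(R'+p\mathbb{N})\oplus I'$ for some $R'\subseteq\{0,\ldots,p-1\}$ and finite $I'$. $\mathcal{A}_{R,p}$: states $\{0,\ldots,p-1\}$, initial $0$, final $R$, transitions $n\xrightarrow{a}(nb+a)\bmod p$. With $m=\max I$, $\mathcal{B}_I$: states $\{0,\ldots,m\}\cup\{\bot\}$, initial $0$, final $I$, transitions $i\xrightarrow{a}ib+a$ if $ib+a\le m$, else $i\xrightarrow{a}\bot$, and $\bot\xrightarrow{a}\bot$. $\mathcal{C}_{R,p,I}$ is the accessible part of the product of $\mathcal{A}_{R,p}$ and $\mathcal{B}_I$ (initial state $(0,0)$, componentwise transitions), with $(s,t)$ final iff exactly one of $s\in R$, $t\in I$ holds. The minimisation is the complete deterministic automaton with fewest states accepting the same language. A $0$-circuit is a circuit all of whose transitions are labelled $0$. *)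

theory Defs
  imports Main
begin

record 'q dfa =
  states :: "'q set"
  init   :: 'q
  final  :: "'q set"
  trans  :: "'q \<Rightarrow> nat \<Rightarrow> 'q"

definition run :: "'q dfa \<Rightarrow> 'q \<Rightarrow> nat list \<Rightarrow> 'q" where
  "run M q w = foldl (trans M) q w"

definition words :: "nat \<Rightarrow> nat list set" where
  "words b = {w. set w \<subseteq> {..<b}}"

definition lang :: "nat \<Rightarrow> 'q dfa \<Rightarrow> nat list set" where
  "lang b M = {w \<in> words b. run M (init M) w \<in> final M}"

definition complete_dfa :: "nat \<Rightarrow> 'q dfa \<Rightarrow> bool" where
  "complete_dfa b M \<longleftrightarrow> finite (states M) \<and> init M \<in> states M \<and> final M \<subseteq> states M
     \<and> (\<forall>q \<in> states M. \<forall>a < b. trans M q a \<in> states M)"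

definition symdiff :: "'a set \<Rightarrow> 'a set \<Rightarrow> 'a set" where
  "symdiff A B = (A - B) \<union> (B - A)"

definition Sset :: "nat \<Rightarrow> nat set \<Rightarrow> nat set \<Rightarrow> nat set" where
  "Sset p R I = symdiff {r + p * j | r j. r \<in> R} I"

definition proper :: "nat \<Rightarrow> nat set \<Rightarrow> nat set \<Rightarrow> bool" where
  "proper p R I \<longleftrightarrow> p \<ge> 1 \<and> R \<subseteq> {..<p} \<and> finite I \<and>
     (\<forall>p'. 0 < p' \<and> p' < p \<longrightarrow>
        \<not> (\<exists>R' I'. R' \<subseteq> {..<p'} \<and> finite I' \<and> Sset p R I = Sset p' R' I'))"

definition autA :: "nat \<Rightarrow> nat \<Rightarrow> nat set \<Rightarrow> nat dfa" where
  "autA b p R = \<lparr> states = {..<p}, init = 0, final = R,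
                  trans = (\<lambda>n a. (n * b + a) mod p) \<rparr>"

text \<open>The automaton B_I; the sink state \<bottom> is represented by None, state i by Some i.\<close>
definition autB :: "nat \<Rightarrow> nat set \<Rightarrow> nat option dfa" where
  "autB b I = (let m = Max I in
     \<lparr> states = Some ` {0..m} \<union> {None}, init = Some 0, final = Some ` I,
       trans = (\<lambda>t a. case t of None \<Rightarrow> None
                     | Some i \<Rightarrow> (if i * b + a \<le> m then Some (i * b + a) else None)) \<rparr>)"

definition autC :: "nat \<Rightarrow> nat \<Rightarrow> nat set \<Rightarrow> nat set \<Rightarrow> (nat \<times> nat option) dfa" where
  "autC b p R I =
     (let A = autA b p R; B = autB b I;
          d = (\<lambda>(s, t) a. (trans A s a, trans B t a));
          P = \<lparr> states = states A \<times> states B, init = (init A, init B),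
                final = {(s, t). (s \<in> final A) \<noteq> (t \<in> final B)}, trans = d \<rparr>;
          Acc = {run P (init P) w | w. w \<in> words b}
      in \<lparr> states = Acc, init = init P, final = final P \<inter> Acc, trans = d \<rparr>)"

text \<open>A minimisation of a language: a complete DFA accepting it with the fewest states.
  State sets are taken inside nat (any finite automaton can be renamed into nat).\<close>
definition is_minimisation :: "nat \<Rightarrow> nat dfa \<Rightarrow> nat list set \<Rightarrow> bool" where
  "is_minimisation b M L \<longleftrightarrow> complete_dfa b M \<and> lang b M = L \<and>
     (\<forall>M' :: nat dfa. complete_dfa b M' \<and> lang b M' = L \<longrightarrow> card (states M) \<le> card (states M'))"

definition on_zero_circuit :: "'q dfa \<Rightarrow> 'q \<Rightarrow> bool" where
  "on_zero_circuit M q \<longleftrightarrow> q \<in> states M \<and> (\<exists>n \<ge> 1. ((\<lambda>s. trans M s 0) ^^ n) q = q)"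

end

theory Submission
  imports Defs "HOL-Number_Theory.Number_Theory"
begin

text \<open>
  The states of a minimal automaton correspond to the left quotients of its language; for the
  numeration language of S, the quotient after a word of value x is determined by x, and a state
  lies on a 0-circuit iff its quotient is unchanged by some \<open>x \<mapsto> x * b ^ n\<close>, n \<ge> 1.
  Write p = q k, where every prime factor of q divides b. For x \<noteq> 0 and large N the quotient of
  \<open>x * b ^ N\<close> is that of the periodic part R + pN at the residue \<open>x * b ^ N mod p\<close>, a multiple
  of q, and on multiples of q multiplication by \<open>b ^ totient k\<close> is the identity mod p. Hence the
  0-circuit quotients are the quotients of the k multiples of q below p together with the
  quotient of 0. They are pairwise distinct: an equality would give R + pN a period smaller
  than p (or, for the quotient of 0, contradict I \<noteq> {}), which properness forbids.
\<close>

section \<open>Base-b numerals\<close>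

definition digits_val :: "nat \<Rightarrow> nat list \<Rightarrow> nat" where
  "digits_val b w = foldl (\<lambda>x a. x * b + a) 0 w"

lemma digits_val_snoc: "digits_val b (w @ [a]) = digits_val b w * b + a"
  by (simp add: digits_val_def)

lemma foldl_digits: "foldl (\<lambda>x a. x * b + a) x w = x * b ^ length w + digits_val b w"
proof (induction w rule: rev_induct)
  case Nil
  then show ?case by (simp add: digits_val_def)
next
  case (snoc a w)
  then show ?case by (simp add: digits_val_snoc algebra_simps)
qed

lemma digits_val_append: "digits_val b (u @ v) = digits_val b u * b ^ length v + digits_val b v"
  by (metis digits_val_def foldl_append foldl_digits)

lemma digits_val_replicate_zero: "digits_val b (replicate n 0) = 0"
  by (induction n) (simp_all add: digits_val_def)

lemma words_append [simp]: "u @ v \<in> words b \<longleftrightarrow> u \<in> words b \<and> v \<in> words b"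
  by (auto simp: words_def)

lemma replicate_zero_in_words: "0 < b \<Longrightarrow> replicate n 0 \<in> words b"
  by (auto simp: words_def)

lemma exists_digits:
  assumes "0 < b" "z < b ^ n"
  shows "\<exists>v \<in> words b. length v = n \<and> digits_val b v = z"
  using assms(2)
proof (induction n arbitrary: z)
  case 0
  then show ?case by (auto simp: words_def digits_val_def)
next
  case (Suc n)
  have "z div b < b ^ n"
    using Suc.prems assms(1) by (simp add: less_mult_imp_div_less mult.commute)
  then obtain v where "v \<in> words b" "length v = n" "digits_val b v = z div b"
    using Suc.IH by blast
  moreover have "z mod b < b" using assms(1) by simp
  ultimately show ?case
    by (intro bexI[of _ "v @ [z mod b]"]) (auto simp: words_def digits_val_snoc)
qed

lemma exists_digits_of_length:
  "1 < b \<Longrightarrow> z \<le> n \<Longrightarrow> \<exists>v \<in> words b. length v = n \<and> digits_val b v = z"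
  using exists_digits[of b z n] power_gt_expt[of b n] by simp

section \<open>Minimal automata and left quotients\<close>

lemma run_Cons: "run M q (a # w) = run M (trans M q a) w"
  by (simp add: run_def)

lemma run_append: "run M q (u @ v) = run M (run M q u) v"
  by (simp add: run_def)

lemma funpow_trans_zero: "((\<lambda>s. trans M s 0) ^^ n) q = run M q (replicate n 0)"
  by (induction n arbitrary: q) (simp_all add: run_def funpow_Suc_right del: funpow.simps)

lemma run_in_states:
  assumes "complete_dfa b M" "q \<in> states M" "w \<in> words b"
  shows "run M q w \<in> states M"
  using assms(2,3)
proof (induction w arbitrary: q)
  case Nil
  then show ?case by (simp add: run_def)
next
  case (Cons a w)
  then have "trans M q a \<in> states M"
    using assms(1) by (auto simp: complete_dfa_def words_def)
  with Cons show ?case by (simp add: run_Cons words_def)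
qed

definition state_lang :: "nat \<Rightarrow> 'q dfa \<Rightarrow> 'q \<Rightarrow> nat list set" where
  "state_lang b M q = {v \<in> words b. run M q v \<in> final M}"

definition left_quotient :: "'a list set \<Rightarrow> 'a list \<Rightarrow> 'a list set" where
  "left_quotient L u = {v. u @ v \<in> L}"

lemma state_lang_run_init:
  "u \<in> words b \<Longrightarrow> state_lang b M (run M (init M) u) = left_quotient (lang b M) u"
  by (auto simp: state_lang_def left_quotient_def lang_def run_append)

lemma exists_smaller_dfa_if_unreachable:
  fixes M :: "'q dfa"
  assumes M: "complete_dfa b M" and q: "q \<in> states M" "\<forall>u \<in> words b. run M (init M) u \<noteq> q"
  shows "\<exists>M' :: 'q dfa. complete_dfa b M' \<and> lang b M' = lang b M \<and>
           card (states M') < card (states M)"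
proof -
  define Acc where "Acc = {run M (init M) u | u. u \<in> words b}"
  define M' where "M' = \<lparr>states = Acc, init = init M, final = final M \<inter> Acc, trans = trans M\<rparr>"
  have Acc_sub: "Acc \<subseteq> states M"
    using M run_in_states[OF M] by (auto simp: Acc_def complete_dfa_def)
  have "init M \<in> Acc"
    unfolding Acc_def by (rule CollectI, rule exI[of _ "[]"]) (simp add: run_def words_def)
  moreover have "trans M s a \<in> Acc" if "s \<in> Acc" "a < b" for s a
  proof -
    obtain u where "u \<in> words b" "s = run M (init M) u" using \<open>s \<in> Acc\<close> by (auto simp: Acc_def)
    then have "u @ [a] \<in> words b" "trans M s a = run M (init M) (u @ [a])"
      using \<open>a < b\<close> by (simp_all add: words_def run_append run_def)
    then show ?thesis unfolding Acc_def by blast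
  qed
  moreover have "finite Acc"
    using M Acc_sub finite_subset by (auto simp: complete_dfa_def)
  ultimately have "complete_dfa b M'"
    by (auto simp: complete_dfa_def M'_def)
  moreover have "lang b M' = lang b M"
    by (auto simp: lang_def M'_def run_def Acc_def)
  moreover have "card Acc < card (states M)"
  proof (intro psubset_card_mono)
    show "finite (states M)"
      using M by (simp add: complete_dfa_def)
    have "q \<notin> Acc"
      using q(2) by (auto simp: Acc_def)
    with Acc_sub q(1) show "Acc \<subset> states M"
      by blast
  qed
  ultimately show ?thesis by (intro exI[of _ M']) (simp add: M'_def)
qed

lemma exists_smaller_dfa_if_equivalent_states:
  fixes M :: "'q dfa"
  assumes M: "complete_dfa b M" and q: "q1 \<in> states M" "q2 \<in> states M" "q1 \<noteq> q2"
    and equiv: "state_lang b M q1 = state_lang b M q2"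
  shows "\<exists>M' :: 'q dfa. complete_dfa b M' \<and> lang b M' = lang b M \<and>
           card (states M') < card (states M)"
proof -
  define g where "g r = (if r = q2 then q1 else r)" for r
  define M' where "M' = \<lparr>states = states M - {q2}, init = g (init M), final = final M - {q2},
                         trans = (\<lambda>s a. g (trans M s a))\<rparr>"
  have g_in: "g r \<in> states M - {q2}" if "r \<in> states M" for r
    using that q by (auto simp: g_def)
  have g_equiv: "run M (g r) v \<in> final M \<longleftrightarrow> run M r v \<in> final M" if "v \<in> words b" for r v
    using equiv that by (auto simp: g_def state_lang_def)
  have trans_in: "trans M s a \<in> states M" if "s \<in> states M" "a < b" for s a
    using M that by (auto simp: complete_dfa_def)
  have run_M': "run M' s w \<in> final M' \<longleftrightarrow> run M s w \<in> final M"
    if "s \<in> states M - {q2}" "w \<in> words b" for s w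
    using that
  proof (induction w arbitrary: s)
    case Nil
    then show ?case by (simp add: run_def M'_def)
  next
    case (Cons a w)
    then have "w \<in> words b" "trans M s a \<in> states M"
      using trans_in by (auto simp: words_def)
    with Cons.IH g_in g_equiv show ?case
      by (simp add: run_Cons M'_def)
  qed
  have "complete_dfa b M'"
    using M g_in trans_in by (auto simp: complete_dfa_def M'_def)
  moreover have "lang b M' = lang b M"
    using run_M'[OF g_in] g_equiv M by (auto simp: lang_def M'_def complete_dfa_def)
  moreover have "card (states M - {q2}) < card (states M)"
    using M q(2) by (intro card_Diff1_less) (auto simp: complete_dfa_def)
  ultimately show ?thesis by (intro exI[of _ M']) (simp add: M'_def)
qed

lemma minimisation_reachable:
  assumes "is_minimisation b M L" "q \<in> states M"
  obtains u where "u \<in> words b" "run M (init M) u = q"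
  using assms exists_smaller_dfa_if_unreachable[of b M q]
  unfolding is_minimisation_def by (meson leD)

lemma minimisation_inj_state_lang:
  assumes "is_minimisation b M L"
  shows "inj_on (state_lang b M) (states M)"
  using assms exists_smaller_dfa_if_equivalent_states[of b M]
  unfolding is_minimisation_def inj_on_def by (meson leD)

lemma run_init_in_states: "complete_dfa b M \<Longrightarrow> u \<in> words b \<Longrightarrow> run M (init M) u \<in> states M"
  using run_in_states[of b M "init M" u] by (simp add: complete_dfa_def)

lemma minimisation_run_eq_iff:
  assumes min: "is_minimisation b M L" and u: "u \<in> words b" "u' \<in> words b"
  shows "run M (init M) u = run M (init M) u' \<longleftrightarrow> left_quotient L u = left_quotient L u'"
proof -
  have M: "complete_dfa b M" and L: "lang b M = L"
    using min by (auto simp: is_minimisation_def)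
  show ?thesis
    using inj_on_eq_iff[OF minimisation_inj_state_lang[OF min]
        run_init_in_states[OF M u(1)] run_init_in_states[OF M u(2)]]
      state_lang_run_init[OF u(1), of M] state_lang_run_init[OF u(2), of M] L
    by simp
qed

lemma minimisation_zero_circuit_iff:
  assumes min: "is_minimisation b M L" and "0 < b" "u \<in> words b"
  shows "on_zero_circuit M (run M (init M) u)
     \<longleftrightarrow> (\<exists>n \<ge> 1. left_quotient L (u @ replicate n 0) = left_quotient L u)"
proof -
  have "run M (run M (init M) u) (replicate n 0) = run M (init M) u
      \<longleftrightarrow> left_quotient L (u @ replicate n 0) = left_quotient L u" for n
    using minimisation_run_eq_iff[OF min _ assms(3), of "u @ replicate n 0"] assms(3)
      replicate_zero_in_words[OF \<open>0 < b\<close>] by (simp add: run_append)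
  moreover have "run M (init M) u \<in> states M"
    using min assms(3) run_init_in_states[of b M u] by (simp add: is_minimisation_def)
  ultimately show ?thesis
    by (simp add: on_zero_circuit_def funpow_trans_zero)
qed

lemma state_lang_image_zero_circuits:
  assumes min: "is_minimisation b M L" and "0 < b"
  shows "state_lang b M ` {q. on_zero_circuit M q}
       = {left_quotient L u | u. u \<in> words b \<and>
                (\<exists>n \<ge> 1. left_quotient L (u @ replicate n 0) = left_quotient L u)}"
    (is "_ ` ?C = ?Q")
proof (intro equalityI subsetI)
  have L: "lang b M = L"
    using min by (simp add: is_minimisation_def)
  fix X
  {
    assume "X \<in> state_lang b M ` ?C"
    then obtain q where q: "on_zero_circuit M q" "X = state_lang b M q"
      by blast
    then have "q \<in> states M"
      by (simp add: on_zero_circuit_def)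
    then obtain u where u: "u \<in> words b" "run M (init M) u = q"
      by (rule minimisation_reachable[OF min])
    then show "X \<in> ?Q"
      using minimisation_zero_circuit_iff[OF min \<open>0 < b\<close> u(1)] q state_lang_run_init[OF u(1), of M] L
      by auto
  next
    assume "X \<in> ?Q"
    then obtain u where u: "u \<in> words b" "X = left_quotient L u"
      and "\<exists>n \<ge> 1. left_quotient L (u @ replicate n 0) = left_quotient L u"
      by blast
    then have "run M (init M) u \<in> ?C"
      using minimisation_zero_circuit_iff[OF min \<open>0 < b\<close>] by blast
    then show "X \<in> state_lang b M ` ?C"
      using state_lang_run_init[OF u(1), of M] u(2) L by (intro image_eqI) auto
  }
qed

lemma card_zero_circuits_minimisation:
  assumes min: "is_minimisation b M L" and "0 < b"
  shows "card {q. on_zero_circuit M q}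
       = card {left_quotient L u | u. u \<in> words b \<and>
                (\<exists>n \<ge> 1. left_quotient L (u @ replicate n 0) = left_quotient L u)}"
proof -
  have "{q. on_zero_circuit M q} \<subseteq> states M"
    by (auto simp: on_zero_circuit_def)
  then show ?thesis
    using card_image[OF inj_on_subset[OF minimisation_inj_state_lang[OF min]]]
      state_lang_image_zero_circuits[OF assms] by metis
qed

section \<open>Quotients of numeration languages\<close>

definition residual :: "nat \<Rightarrow> nat set \<Rightarrow> nat \<Rightarrow> nat list set" where
  "residual b S x = {v \<in> words b. x * b ^ length v + digits_val b v \<in> S}"

lemma left_quotient_numeral_lang:
  "u \<in> words b \<Longrightarrow>
   left_quotient {w \<in> words b. digits_val b w \<in> S} u = residual b S (digits_val b u)"
  by (auto simp: left_quotient_def residual_def digits_val_append)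

lemma residual_mult_power:
  "0 < b \<Longrightarrow> v \<in> residual b S (x * b ^ n) \<longleftrightarrow> replicate n 0 @ v \<in> residual b S x"
  by (simp add: residual_def digits_val_append digits_val_replicate_zero replicate_zero_in_words
      power_add mult.assoc)

lemma residual_mult_power_iterate:
  assumes "0 < b" "residual b S (x * b ^ n) = residual b S x"
  shows "residual b S (x * b ^ (n * j)) = residual b S x"
proof (induction j)
  case (Suc j)
  have "residual b S (x * b ^ n * b ^ (n * j)) = residual b S (x * b ^ (n * j))"
    using assms by (auto simp: residual_mult_power)
  with Suc show ?case
    by (simp add: power_add mult.assoc)
qed simp

lemma zero_circuit_quotients_numeral_lang:
  assumes "1 < b" and L: "L = {w \<in> words b. digits_val b w \<in> S}"
  shows "{left_quotient L u | u. u \<in> words b \<and>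
            (\<exists>n \<ge> 1. left_quotient L (u @ replicate n 0) = left_quotient L u)}
       = {residual b S x | x. \<exists>n \<ge> 1. residual b S (x * b ^ n) = residual b S x}"
    (is "?Q = ?Z")
proof
  have quot: "left_quotient L u = residual b S (digits_val b u)" if "u \<in> words b" for u
    using left_quotient_numeral_lang[OF that] L by simp
  have quot_zeros: "left_quotient L (u @ replicate n 0) = residual b S (digits_val b u * b ^ n)"
    if "u \<in> words b" for u n
    using quot[of "u @ replicate n 0"] that replicate_zero_in_words[of b n] assms(1)
    by (simp add: digits_val_append digits_val_replicate_zero)
  show "?Q \<subseteq> ?Z"
    using quot quot_zeros by fastforce
  show "?Z \<subseteq> ?Q"
  proof
    fix X assume "X \<in> ?Z"
    then obtain x n where X: "X = residual b S x" "n \<ge> 1" "residual b S (x * b ^ n) = X"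
      by blast
    obtain u where u: "u \<in> words b" "digits_val b u = x"
      using exists_digits_of_length[OF assms(1) order_refl] by blast
    then show "X \<in> ?Q"
      using quot[OF u(1)] quot_zeros[OF u(1), of n] X by blast
  qed
qed

lemma notin_above_Max: "finite I \<Longrightarrow> Max I < x \<Longrightarrow> x \<notin> I"
  using Max_ge leD by blast

lemma residual_symdiff_above_Max:
  assumes "0 < b" "finite I" "Max I < y"
  shows "residual b (symdiff T I) y = residual b T y"
proof -
  have "Max I < y * b ^ n + z" for n z
  proof -
    have "y \<le> y * b ^ n"
      using assms(1) by simp
    then show ?thesis using assms(3) by linarith
  qed
  then show ?thesis
    using notin_above_Max[OF assms(2)] by (auto simp: residual_def symdiff_def)
qed

lemma mod_mult_add_left_eq: "(x mod p * c + z) mod p = (x * c + z) mod (p :: nat)"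
  by (metis mod_add_left_eq mod_mult_left_eq)

lemma residual_mod:
  "residual b {x. x mod p \<in> R} y = residual b {x. x mod p \<in> R} (y mod p)"
  by (simp add: residual_def mod_mult_add_left_eq)

section \<open>Periods of sets of naturals\<close>

definition has_period :: "nat set \<Rightarrow> nat \<Rightarrow> bool" where
  "has_period A d \<longleftrightarrow> (\<forall>x. x + d \<in> A \<longleftrightarrow> x \<in> A)"

lemma has_period_mult:
  assumes "has_period A d"
  shows "x + d * c \<in> A \<longleftrightarrow> x \<in> A"
proof (induction c)
  case (Suc c)
  have "x + d * Suc c = (x + d * c) + d"
    by simp
  with Suc assms show ?case
    by (metis has_period_def)
qed simp

lemma has_period_mod: "has_period A d \<Longrightarrow> x \<in> A \<longleftrightarrow> x mod d \<in> A"
  using has_period_mult[of A d "x mod d" "x div d"] by simp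

lemma has_period_gcd:
  assumes "has_period A d" "has_period A p" "0 < d"
  shows "has_period A (gcd d p)"
proof -
  obtain c e where bezout: "d * c = p * e + gcd d p"
    using bezout_nat[of d p] assms(3) by auto
  have "x + gcd d p \<in> A \<longleftrightarrow> x \<in> A" for x
  proof -
    have "x + gcd d p \<in> A \<longleftrightarrow> x + gcd d p + p * e \<in> A"
      using has_period_mult[OF assms(2)] by simp
    also have "x + gcd d p + p * e = x + d * c"
      using bezout by simp
    also have "x + d * c \<in> A \<longleftrightarrow> x \<in> A"
      by (rule has_period_mult[OF assms(1)])
    finally show ?thesis .
  qed
  then show ?thesis
    by (simp add: has_period_def)
qed

lemma has_period_if_eventually:
  assumes "has_period A p" "0 < p" "\<And>x. m \<le> x \<Longrightarrow> x + d \<in> A \<longleftrightarrow> x \<in> A"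
  shows "has_period A d"
  unfolding has_period_def
proof
  fix x
  have "x + d \<in> A \<longleftrightarrow> x + d + p * m \<in> A"
    using has_period_mult[OF assms(1)] by simp
  also have "x + d + p * m = (x + p * m) + d"
    by simp
  also have "\<dots> \<in> A \<longleftrightarrow> x + p * m \<in> A"
    using assms(2) by (intro assms(3)) (cases p, simp_all)
  also have "\<dots> \<longleftrightarrow> x \<in> A"
    by (rule has_period_mult[OF assms(1)])
  finally show "x + d \<in> A \<longleftrightarrow> x \<in> A" .
qed

lemma residue_class_union_eq:
  fixes p :: nat
  assumes "R \<subseteq> {..<p}"
  shows "{r + p * j | r j. r \<in> R} = {x. x mod p \<in> R}"
proof (intro equalityI subsetI)
  fix x assume "x \<in> {r + p * j | r j. r \<in> R}"
  then obtain r j where "x = r + p * j" "r \<in> R"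
    by blast
  with assms show "x \<in> {x. x mod p \<in> R}"
    by auto
next
  fix x assume "x \<in> {x. x mod p \<in> R}"
  moreover have "x = x mod p + p * (x div p)"
    by simp
  ultimately show "x \<in> {r + p * j | r j. r \<in> R}"
    by blast
qed

lemma Sset_eq_symdiff: "R \<subseteq> {..<p} \<Longrightarrow> Sset p R I = symdiff {x. x mod p \<in> R} I"
  using residue_class_union_eq[of R p] by (simp add: Sset_def)

lemma proper_imp_no_smaller_period:
  assumes "proper p R I" "0 < p'" "p' < p" "R' \<subseteq> {..<p'}" "finite I'"
  shows "Sset p R I \<noteq> Sset p' R' I'"
  using assms unfolding proper_def by metis

lemma proper_le_period:
  assumes proper: "proper p R I" and period: "has_period {x. x mod p \<in> R} d" and "0 < d"
  shows "p \<le> d"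
proof -
  define A where "A = {x. x mod p \<in> R}"
  define g where "g = gcd d p"
  define R' where "R' = {r. r < g \<and> r \<in> A}"
  have R: "R \<subseteq> {..<p}" and "finite I"
    using proper by (auto simp: proper_def)
  have "has_period A p"
    by (simp add: has_period_def A_def)
  then have "has_period A g"
    using has_period_gcd period \<open>0 < d\<close> by (simp add: A_def g_def)
  moreover have "0 < g" "g \<le> d"
    using \<open>0 < d\<close> by (simp_all add: g_def)
  ultimately have A_eq: "{x. x mod g \<in> R'} = A"
    using has_period_mod[of A g] by (auto simp: R'_def)
  have R': "R' \<subseteq> {..<g}"
    by (auto simp: R'_def)
  with A_eq have S_eq: "Sset p R I = Sset g R' I"
    using Sset_eq_symdiff[OF R'] Sset_eq_symdiff[OF R] by (simp add: A_def)
  then have "\<not> g < p"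
    using proper_imp_no_smaller_period[OF proper \<open>0 < g\<close> _ R' \<open>finite I\<close>] by blast
  with \<open>g \<le> d\<close> show ?thesis by simp
qed

section \<open>The part of p coprime to b\<close>

lemma coprime_part:
  fixes p b :: nat
  assumes "0 < p" "k = (GREATEST d. d dvd p \<and> coprime d b)"
  shows coprime_part_dvd: "k dvd p"
    and coprime_part_coprime: "coprime k b"
    and coprime_part_greatest: "\<And>d. d dvd p \<Longrightarrow> coprime d b \<Longrightarrow> d \<le> k"
proof -
  have bound: "\<And>d. d dvd p \<and> coprime d b \<Longrightarrow> d \<le> p"
    using assms(1) by (auto intro: dvd_imp_le)
  have "1 dvd p \<and> coprime 1 b"
    by simp
  then show "k dvd p" "coprime k b"
    using GreatestI_nat[of "\<lambda>d. d dvd p \<and> coprime d b" 1 p, OF _ bound] assms(2) by auto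
  show "\<And>d. d dvd p \<Longrightarrow> coprime d b \<Longrightarrow> d \<le> k"
    using Greatest_le_nat[OF _ bound] assms(2) by auto
qed

lemma prime_dvd_cofactor_imp_dvd:
  fixes p b :: nat
  assumes p: "0 < p" and k: "k = (GREATEST d. d dvd p \<and> coprime d b)"
    and r: "prime r" "r dvd p div k"
  shows "r dvd b"
proof (rule ccontr)
  assume "\<not> r dvd b"
  then have "coprime (k * r) b"
    using coprime_part_coprime[OF p k] r(1) by (simp add: prime_imp_coprime)
  moreover have "k * r dvd p"
    using mult_dvd_mono[OF dvd_refl r(2), of k] coprime_part_dvd[OF p k] by simp
  ultimately have "k * r \<le> k"
    using coprime_part_greatest[OF p k] by blast
  moreover have "0 < k"
    using coprime_part_dvd[OF p k] p by (auto intro: Nat.gr0I)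
  moreover have "2 \<le> r"
    using r(1) prime_ge_2_nat by blast
  ultimately show False
    by simp
qed

lemma dvd_power_if_prime_divisors_dvd:
  fixes q b :: nat
  assumes "0 < q" "\<And>r. prime r \<Longrightarrow> r dvd q \<Longrightarrow> r dvd b" "q \<le> N"
  shows "q dvd b ^ N"
proof -
  have "q dvd b ^ q"
    using assms(1,2)
  proof (induction q rule: less_induct)
    case (less q)
    show ?case
    proof (cases "q = 1")
      case False
      then obtain r q' where r: "prime r" "q = r * q'"
        using prime_factor_nat[of q] by auto
      then have "0 < q'" "q' < q"
        using less.prems(1) prime_gt_1_nat[of r] by auto
      then have "q' dvd b ^ q'"
        using less r(2) by (metis dvd_mult2 mult.commute)
      moreover have "r dvd b"
        using less.prems(2) r by simp
      ultimately have "q dvd b ^ Suc q'"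
        using r(2) by (simp add: mult_dvd_mono)
      then show ?thesis
        using \<open>q' < q\<close> by (meson Suc_leI dvd_trans le_imp_power_dvd)
    qed simp
  qed
  then show ?thesis
    using assms(3) by (meson dvd_trans le_imp_power_dvd)
qed

lemma cong_mult_power_totient:
  fixes b k p s :: nat
  assumes "k dvd p" "coprime k b" "p div k dvd s"
  shows "[s * b ^ (totient k * c) = s] (mod p)"
proof -
  obtain t where s: "s = p div k * t"
    using assms(3) ..
  have "[b ^ totient k = 1] (mod k)"
    using assms(2) by (intro euler_theorem) (simp add: ac_simps)
  then have "[t * (b ^ totient k) ^ c = t * 1 ^ c] (mod k)"
    by (intro cong_scalar_left cong_pow)
  then have "[p div k * (t * b ^ (totient k * c)) = p div k * t] (mod (p div k * k))"
    by (intro cong_cmult_leftI) (simp add: power_mult)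
  then show ?thesis
    using assms(1) by (simp add: s ac_simps)
qed

lemma card_multiples_below:
  fixes q k :: nat
  assumes "0 < q"
  shows "card {s. s < q * k \<and> q dvd s} = k"
proof -
  have "{s. s < q * k \<and> q dvd s} = (*) q ` {..<k}"
    using assms by (auto elim!: dvdE)
  then show ?thesis
    using inj_on_mult[of q "{..<k}"] assms by (simp add: card_image)
qed

section \<open>Zero-circuit quotients for a proper triple\<close>

locale proper_triple =
  fixes b p :: nat and R I :: "nat set" and k :: nat
  assumes base: "1 < b" and proper: "proper p R I"
    and k_eq: "k = (GREATEST d. d dvd p \<and> coprime d b)"
begin

abbreviation periodic_part :: "nat set" where
  "periodic_part \<equiv> {x. x mod p \<in> R}"

text \<open>The residues mod p lying on cycles of \<open>x \<mapsto> b * x mod p\<close>.\<close>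
definition cyclic :: "nat set" where
  "cyclic = {s. s < p \<and> p div k dvd s}"

lemma p_pos: "0 < p" and R_sub: "R \<subseteq> {..<p}" and finite_I: "finite I"
  using proper by (auto simp: proper_def)

lemma k_dvd: "k dvd p" and coprime_k: "coprime k b"
  using coprime_part_dvd coprime_part_coprime p_pos k_eq by blast+

lemma cofactor_pos: "0 < p div k"
  using k_dvd p_pos by auto

lemma card_cyclic: "card cyclic = k"
  using card_multiples_below[OF cofactor_pos, of k] k_dvd by (simp add: cyclic_def)

lemma finite_cyclic: "finite cyclic"
  by (simp add: cyclic_def)

lemma cyclic_mult_power_totient: "s \<in> cyclic \<Longrightarrow> s * b ^ (totient k * c) mod p = s"
  using cong_mult_power_totient[OF k_dvd coprime_k, of s c] by (simp add: cyclic_def cong_def)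

lemma mult_power_mod_in_cyclic:
  assumes "p div k \<le> N"
  shows "x * b ^ N mod p \<in> cyclic"
proof -
  have "p div k dvd b ^ N"
    using dvd_power_if_prime_divisors_dvd[OF cofactor_pos _ assms]
      prime_dvd_cofactor_imp_dvd[OF p_pos k_eq] by blast
  moreover have "p div k dvd p"
    using k_dvd by (metis dvd_div_mult_self dvd_triv_left)
  ultimately show ?thesis
    using p_pos by (simp add: cyclic_def dvd_mod)
qed

lemma residual_above_Max:
  "Max I < y \<Longrightarrow> residual b (Sset p R I) y = residual b periodic_part (y mod p)"
  using residual_symdiff_above_Max[of b I y periodic_part] residual_mod[of b p R y] base finite_I
    Sset_eq_symdiff[OF R_sub] by simp

text \<open>On cyclic residues, appending a word whose length is a multiple of \<open>totient k\<close>
  just adds its value, since \<open>b ^ totient k\<close> acts as the identity there.\<close>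
lemma exists_test_word:
  "\<exists>v \<in> words b. digits_val b v = z \<and>
     (\<forall>s \<in> cyclic. v \<in> residual b periodic_part s \<longleftrightarrow> s + z \<in> periodic_part)"
proof -
  define n where "n = totient k * (z + 1)"
  have "0 < totient k"
    using k_dvd p_pos by auto
  then have "1 * (z + 1) \<le> n"
    unfolding n_def by (intro mult_le_mono1) linarith
  then have "z \<le> n"
    by simp
  then obtain v where v: "v \<in> words b" "length v = n" "digits_val b v = z"
    using exists_digits_of_length[OF base] by blast
  have "v \<in> residual b periodic_part s \<longleftrightarrow> s + z \<in> periodic_part" if "s \<in> cyclic" for s
  proof -
    have "(s * b ^ n + z) mod p = (s * b ^ n mod p + z) mod p"
      by (simp add: mod_add_left_eq)
    also have "\<dots> = (s + z) mod p"
      using cyclic_mult_power_totient[OF that, of "z + 1"] unfolding n_def by simp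
    finally show ?thesis
      using v by (simp add: residual_def)
  qed
  with v show ?thesis
    by blast
qed

lemma eventually_periodic_imp_le:
  assumes "0 < d" "\<And>x. m \<le> x \<Longrightarrow> x + d \<in> periodic_part \<longleftrightarrow> x \<in> periodic_part"
  shows "p \<le> d"
proof -
  have "has_period periodic_part p"
    by (simp add: has_period_def)
  then have "has_period periodic_part d"
    using has_period_if_eventually[OF _ p_pos assms(2)] by blast
  then show ?thesis
    using proper_le_period[OF proper] assms(1) by blast
qed

lemma inj_on_residual_cyclic: "inj_on (residual b periodic_part) cyclic"
proof (rule linorder_inj_onI')
  fix s s' assume s: "s \<in> cyclic" "s' \<in> cyclic" "s < s'"
  show "residual b periodic_part s \<noteq> residual b periodic_part s'"
  proof
    assume eq: "residual b periodic_part s = residual b periodic_part s'"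
    have shift: "s + z \<in> periodic_part \<longleftrightarrow> s' + z \<in> periodic_part" for z
      using exists_test_word[of z] eq s by auto
    have "x + (s' - s) \<in> periodic_part \<longleftrightarrow> x \<in> periodic_part" if "s \<le> x" for x
    proof -
      have "s + (x - s) = x" "s' + (x - s) = x + (s' - s)"
        using that s(3) by simp_all
      then show ?thesis
        using shift[of "x - s"] by simp
    qed
    then have "p \<le> s' - s"
      using eventually_periodic_imp_le[of "s' - s" s] s(3) by simp
    with s show False
      by (auto simp: cyclic_def)
  qed
qed

lemma residual_zero_notin_cyclic:
  assumes "I \<noteq> {}"
  shows "residual b (Sset p R I) 0 \<notin> residual b periodic_part ` cyclic"
proof
  assume "residual b (Sset p R I) 0 \<in> residual b periodic_part ` cyclic"
  then obtain s where s: "s \<in> cyclic" and eq: "residual b (Sset p R I) 0 = residual b periodic_part s"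
    by blast
  have S_iff: "z \<in> Sset p R I \<longleftrightarrow> s + z \<in> periodic_part" for z
    using exists_test_word[of z] eq s by (auto simp: residual_def)
  show False
  proof (cases "s = 0")
    case True
    obtain x where "x \<in> I"
      using assms by blast
    then show False
      using S_iff[of x] True Sset_eq_symdiff[OF R_sub] by (simp add: symdiff_def)
  next
    case False
    have "x + s \<in> periodic_part \<longleftrightarrow> x \<in> periodic_part" if "Suc (Max I) \<le> x" for x
      using S_iff[of x] that notin_above_Max[OF finite_I] Sset_eq_symdiff[OF R_sub]
      by (auto simp: symdiff_def add.commute)
    then have "p \<le> s"
      using eventually_periodic_imp_le[of s "Suc (Max I)"] False by simp
    with s show False
      by (simp add: cyclic_def)
  qed
qed

lemma zero_circuit_residuals:
  "{residual b (Sset p R I) x | x.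
      \<exists>n \<ge> 1. residual b (Sset p R I) (x * b ^ n) = residual b (Sset p R I) x}
   = insert (residual b (Sset p R I) 0) (residual b periodic_part ` cyclic)"
  (is "?Z = _")
proof (intro equalityI subsetI)
  fix X assume "X \<in> ?Z"
  then obtain x n where X: "X = residual b (Sset p R I) x" "1 \<le> n"
    and circuit: "residual b (Sset p R I) (x * b ^ n) = residual b (Sset p R I) x"
    by blast
  show "X \<in> insert (residual b (Sset p R I) 0) (residual b periodic_part ` cyclic)"
  proof (cases "x = 0")
    case False
    define j where "j = Max I + p div k + 1"
    define N where "N = n * j"
    have "j \<le> N"
      using X(2) mult_le_mono1[of 1 n j] by (simp add: N_def)
    have "N < b ^ N"
      using base by (simp add: power_gt_expt)
    also have "b ^ N \<le> x * b ^ N"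
      using False by simp
    finally have "Max I < x * b ^ N"
      using \<open>j \<le> N\<close> by (simp add: j_def)
    have "X = residual b (Sset p R I) (x * b ^ N)"
      using residual_mult_power_iterate[OF _ circuit, of j] base X(1) by (simp add: N_def)
    also have "\<dots> = residual b periodic_part (x * b ^ N mod p)"
      by (rule residual_above_Max[OF \<open>Max I < x * b ^ N\<close>])
    finally have "X = residual b periodic_part (x * b ^ N mod p)" .
    moreover have "x * b ^ N mod p \<in> cyclic"
      using \<open>j \<le> N\<close> by (intro mult_power_mod_in_cyclic) (simp add: j_def)
    ultimately show ?thesis
      by blast
  qed (use X in simp)
next
  fix X assume X: "X \<in> insert (residual b (Sset p R I) 0) (residual b periodic_part ` cyclic)"
  show "X \<in> ?Z"
  proof (cases "X = residual b (Sset p R I) 0")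
    case True
    then show ?thesis
      by (intro CollectI exI[of _ 0]) (auto intro: exI[of _ 1])
  next
    case False
    then obtain s where s: "s \<in> cyclic" "X = residual b periodic_part s"
      using X by blast
    define y where "y = s + p * (Max I + 1)"
    have y_big: "Max I < y"
      using p_pos by (cases p) (simp_all add: y_def)
    have "y \<le> y * b ^ totient k"
      using base by simp
    with y_big have y'_big: "Max I < y * b ^ totient k"
      by linarith
    have y_mod: "y mod p = s"
      unfolding y_def mod_mult_self2 using s(1) by (simp add: cyclic_def)
    have y'_mod: "y * b ^ totient k mod p = s"
      using cyclic_mult_power_totient[OF s(1), of 1] y_mod by (metis mod_mult_left_eq mult_1_right)
    have X_y: "X = residual b (Sset p R I) y"
      and circuit: "residual b (Sset p R I) (y * b ^ totient k) = residual b (Sset p R I) y"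
      using residual_above_Max[OF y_big] residual_above_Max[OF y'_big] y_mod y'_mod s(2) by simp_all
    have "1 \<le> totient k"
      using k_dvd p_pos by (auto simp: Suc_le_eq)
    with circuit show ?thesis
      unfolding X_y by blast
  qed
qed

lemma card_zero_circuit_residuals:
  assumes "I \<noteq> {}"
  shows "card {residual b (Sset p R I) x | x.
            \<exists>n \<ge> 1. residual b (Sset p R I) (x * b ^ n) = residual b (Sset p R I) x} = k + 1"
  unfolding zero_circuit_residuals
  using card_image[OF inj_on_residual_cyclic] card_cyclic finite_cyclic
    residual_zero_notin_cyclic[OF assms] by simp

end

section \<open>The product automaton\<close>

definition autB_state :: "nat set \<Rightarrow> nat \<Rightarrow> nat option" where
  "autB_state I x = (if x \<le> Max I then Some x else None)"

lemma trans_autC: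
  "trans (autC b p R I) (s, t) a =
     ((s * b + a) mod p,
      case t of None \<Rightarrow> None | Some i \<Rightarrow> if i * b + a \<le> Max I then Some (i * b + a) else None)"
  by (simp add: autC_def autA_def autB_def Let_def)

lemma run_autC:
  assumes "1 \<le> b"
  shows "run (autC b p R I) (x mod p, autB_state I x) w
       = (foldl (\<lambda>x a. x * b + a) x w mod p, autB_state I (foldl (\<lambda>x a. x * b + a) x w))"
proof (induction w arbitrary: x)
  case (Cons a w)
  have "x \<le> x * b"
    using assms by simp
  then have "x \<le> x * b + a"
    by (rule trans_le_add1)
  then have "trans (autC b p R I) (x mod p, autB_state I x) a = ((x * b + a) mod p, autB_state I (x * b + a))"
    by (auto simp: trans_autC autB_state_def mod_mult_add_left_eq)
  with Cons show ?case
    by (simp add: run_Cons)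
qed (simp add: run_def)

lemma lang_autC:
  assumes "1 \<le> b" "R \<subseteq> {..<p}" "finite I"
  shows "lang b (autC b p R I) = {w \<in> words b. digits_val b w \<in> Sset p R I}"
proof -
  have run: "run (autC b p R I) (init (autC b p R I)) w
           = (digits_val b w mod p, autB_state I (digits_val b w))" for w
    using run_autC[OF assms(1), of p R I 0 w]
    by (simp add: autC_def autA_def autB_def autB_state_def Let_def digits_val_def)
  have "run (autC b p R I) (init (autC b p R I)) w \<in> states (autC b p R I)" if "w \<in> words b" for w
    using that by (auto simp: autC_def Let_def run_def)
  moreover have "autB_state I x \<in> Some ` I \<longleftrightarrow> x \<in> I" for x
    using notin_above_Max[OF assms(3)] by (auto simp: autB_state_def)
  ultimately show ?thesis
    using run Sset_eq_symdiff[OF assms(2)]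
    by (auto simp: lang_def symdiff_def autC_def autA_def autB_def Let_def)
qed

theorem proposition41:
  fixes b p :: nat and R I :: "nat set" and M :: "nat dfa"
  assumes "b > 1"
    and "proper p R I"
    and "I \<noteq> {}"
    and "k = (GREATEST d. d dvd p \<and> coprime d b)"
    and "is_minimisation b M (lang b (autC b p R I))"
  shows "card {q. on_zero_circuit M q} = k + 1"
proof -
  interpret proper_triple b p R I k
    using assms(1,2,4) by unfold_locales
  have L: "lang b (autC b p R I) = {w \<in> words b. digits_val b w \<in> Sset p R I}"
    using lang_autC base R_sub finite_I by simp
  have "card {q. on_zero_circuit M q}
      = card {left_quotient (lang b (autC b p R I)) u | u. u \<in> words b \<and>
               (\<exists>n \<ge> 1. left_quotient (lang b (autC b p R I)) (u @ replicate n 0)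
                        = left_quotient (lang b (autC b p R I)) u)}"
    using card_zero_circuits_minimisation[OF assms(5)] base by simp
  also have "\<dots> = card {residual b (Sset p R I) x | x.
                    \<exists>n \<ge> 1. residual b (Sset p R I) (x * b ^ n) = residual b (Sset p R I) x}"
    unfolding zero_circuit_quotients_numeral_lang[OF base L] ..
  also have "\<dots> = k + 1"
    using card_zero_circuit_residuals[OF assms(3)] .
  finally show ?thesis .
qed

end
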